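(* Let $X\subset\mathbb{P}^N$ be a projective variety such that $\operatorname{Hrk}_X(p)<\infty$ for every $p\in\mathbb{P}^N$. Then $X$ is strongly concise, i.e. for every $i\in\{0,\ldots,N\}$, $(X\cap H_i)\not\subset\bigcup_{j\ne i}H_j$.
   Context: Work in $\mathbb{P}^N$ over $\mathbb{C}$ with coordinates $x_0,\dots,x_N$; $H_i=\{x_i=0\}$. Hadamard product: $(p_0:\cdots:p_N)\star(q_0:\cdots:q_N)=(p_0q_0:\cdots:p_Nq_N)$, defined when not all $p_iq_i$ vanish. $\operatorname{Hrk}_X(q)=\min\{m\mid q=p_1\star\cdots\star p_m,\ p_i\in X\}$, or $\infty$ if no such decomposition exists. *)

theory Defs
  imports Complex_Main "HOL-Library.Poly_Mapping" "HOL-Library.Extended_Nat"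
begin

text \<open>Points of P^N are represented by nonzero coordinate vectors x_0..x_N
 (functions nat => complex vanishing beyond N); projective sets are the
 corresponding cones of nonzero vectors.\<close>

type_synonym cvec = "nat \<Rightarrow> complex"

definition pvecs :: "nat \<Rightarrow> cvec set" where
  "pvecs N = {x. (\<forall>i>N. x i = 0) \<and> (\<exists>i\<le>N. x i \<noteq> 0)}"

definition proportional :: "cvec \<Rightarrow> cvec \<Rightarrow> bool" where
  "proportional p q \<longleftrightarrow> (\<exists>c. c \<noteq> 0 \<and> p = (\<lambda>i. c * q i))"

type_synonym cpoly = "(nat \<Rightarrow>\<^sub>0 nat) \<Rightarrow>\<^sub>0 complex"

definition mpoly_eval :: "cpoly \<Rightarrow> cvec \<Rightarrow> complex" where
  "mpoly_eval f x = (\<Sum>mon\<in>Poly_Mapping.keys f. Poly_Mapping.lookup f mon * (\<Prod>v\<in>Poly_Mapping.keys mon. x v ^ Poly_Mapping.lookup mon v))"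

definition homog_poly :: "nat \<Rightarrow> cpoly \<Rightarrow> bool" where
  "homog_poly N f \<longleftrightarrow> (\<forall>mon\<in>Poly_Mapping.keys f. Poly_Mapping.keys mon \<subseteq> {..N}) \<and>
     (\<exists>d. \<forall>mon\<in>Poly_Mapping.keys f. (\<Sum>v\<in>Poly_Mapping.keys mon. Poly_Mapping.lookup mon v) = d)"

definition proj_zero_set :: "nat \<Rightarrow> cpoly set \<Rightarrow> cvec set" where
  "proj_zero_set N F = {x \<in> pvecs N. \<forall>f\<in>F. mpoly_eval f x = 0}"

definition proj_closed :: "nat \<Rightarrow> cvec set \<Rightarrow> bool" where
  "proj_closed N X \<longleftrightarrow> (\<exists>F. (\<forall>f\<in>F. homog_poly N f) \<and> X = proj_zero_set N F)"

definition proj_variety :: "nat \<Rightarrow> cvec set \<Rightarrow> bool" where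
  "proj_variety N X \<longleftrightarrow> proj_closed N X \<and> X \<noteq> {} \<and>
     (\<forall>Y Z. proj_closed N Y \<and> proj_closed N Z \<and> X = Y \<union> Z \<longrightarrow> X = Y \<or> X = Z)"

definition hadamard :: "cvec \<Rightarrow> cvec \<Rightarrow> cvec" where
  "hadamard p q = (\<lambda>i. p i * q i)"

definition hadamard_list :: "cvec list \<Rightarrow> cvec" where
  "hadamard_list ps = foldr hadamard ps (\<lambda>_. 1)"

text \<open>Hadamard rank; Inf of the empty set of enat is infinity.  Since q is a
 nonzero vector, proportionality forces the product to be defined (nonzero).\<close>
definition Hrk :: "cvec set \<Rightarrow> cvec \<Rightarrow> enat" where
  "Hrk X q = (INF m \<in> {m. m \<ge> 1 \<and> (\<exists>ps. length ps = m \<and> set ps \<subseteq> X \<and>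
       proportional q (hadamard_list ps))}. enat m)"

definition coord_hyp :: "nat \<Rightarrow> nat \<Rightarrow> cvec set" where
  "coord_hyp N i = {x \<in> pvecs N. x i = 0}"

end

theory Submission
  imports Defs
begin

text \<open>The point whose coordinates are all 1 except x_i = 0 is a Hadamard product of
 points of X.  Its i-th coordinate vanishes, so some factor lies on H_i; all its other
 coordinates are nonzero, so no factor lies on any other H_j.\<close>

lemma hadamard_list_apply: "hadamard_list ps j = (\<Prod>q\<leftarrow>ps. q j)"
  by (induction ps) (auto simp: hadamard_list_def hadamard_def)

lemma hadamard_list_eq_0_iff: "hadamard_list ps j = 0 \<longleftrightarrow> (\<exists>q\<in>set ps. q j = 0)"
  by (auto simp: hadamard_list_apply prod_list_zero_iff)

lemma proportional_eq_0_iff: "proportional p q \<Longrightarrow> p j = 0 \<longleftrightarrow> q j = 0"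
  by (auto simp: proportional_def)

lemma proj_closed_subset_pvecs: "proj_closed N X \<Longrightarrow> X \<subseteq> pvecs N"
  by (auto simp: proj_closed_def proj_zero_set_def)

lemma Hrk_finite_imp_decomposition:
  assumes "Hrk X q < \<infinity>"
  obtains ps where "set ps \<subseteq> X" "proportional q (hadamard_list ps)"
proof -
  have "{m. m \<ge> 1 \<and> (\<exists>ps. length ps = m \<and> set ps \<subseteq> X \<and>
          proportional q (hadamard_list ps))} \<noteq> {}"
    using assms unfolding Hrk_def by (metis INF_empty top_enat_def less_irrefl)
  then show ?thesis using that by blast
qed

lemma factor_with_zero_pattern:
  assumes "set ps \<subseteq> X" "proportional p (hadamard_list ps)"
    and "p i = 0" "\<forall>j\<in>J. p j \<noteq> 0"
  shows "\<exists>q\<in>X. q i = 0 \<and> (\<forall>j\<in>J. q j \<noteq> 0)"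
proof -
  have "hadamard_list ps i = 0"
    using assms(2,3) proportional_eq_0_iff by blast
  then obtain q where q: "q \<in> set ps" "q i = 0"
    by (auto simp: hadamard_list_eq_0_iff)
  have "\<forall>j\<in>J. hadamard_list ps j \<noteq> 0"
    using assms(2,4) proportional_eq_0_iff by blast
  then have "\<forall>j\<in>J. q j \<noteq> 0"
    using q(1) by (auto simp: hadamard_list_eq_0_iff)
  then show ?thesis using q assms(1) by blast
qed

definition off_hyperplane_point :: "nat \<Rightarrow> nat \<Rightarrow> cvec" where
  "off_hyperplane_point N i = (\<lambda>j. if j \<le> N \<and> j \<noteq> i then 1 else 0)"

lemma off_hyperplane_point_in_pvecs:
  assumes "N \<ge> 1"
  shows "off_hyperplane_point N i \<in> pvecs N"
proof -
  have "\<exists>j\<le>N. j \<noteq> i"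
    using assms by (cases "i = 0") (auto intro: exI[of _ 1] exI[of _ 0])
  then show ?thesis by (auto simp: pvecs_def off_hyperplane_point_def)
qed

theorem mainTheorem4:
  fixes N :: nat and X :: "cvec set"
  assumes "N \<ge> 1"
    and "proj_variety N X"
    and "\<forall>p\<in>pvecs N. Hrk X p < \<infinity>"
  shows "\<forall>i\<le>N. \<not> (X \<inter> coord_hyp N i \<subseteq> (\<Union>j\<in>{..N} - {i}. coord_hyp N j))"
proof (intro allI impI)
  fix i
  let ?p = "off_hyperplane_point N i"
  have "Hrk X ?p < \<infinity>"
    using assms(1,3) off_hyperplane_point_in_pvecs by blast
  then obtain ps where "set ps \<subseteq> X" "proportional ?p (hadamard_list ps)"
    by (rule Hrk_finite_imp_decomposition)
  moreover have "?p i = 0" "\<forall>j\<in>{..N} - {i}. ?p j \<noteq> 0"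
    by (auto simp: off_hyperplane_point_def)
  ultimately obtain q where q: "q \<in> X" "q i = 0" "\<forall>j\<in>{..N} - {i}. q j \<noteq> 0"
    using factor_with_zero_pattern by blast
  moreover have "q \<in> pvecs N"
    using q(1) assms(2) proj_closed_subset_pvecs by (auto simp: proj_variety_def)
  ultimately show "\<not> (X \<inter> coord_hyp N i \<subseteq> (\<Union>j\<in>{..N} - {i}. coord_hyp N j))"
    by (auto simp: coord_hyp_def)
qed

end
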